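(* Let $k\ge2$ and $n\ge3$, and write $q=q_{n,k}$, $r=r_{n,k}$ and $N=N_{n,k}=\lfloor(k-1)(n-1)/k\rfloor$. Write $\mathcal{F}_{n,k}(x)=x^{r}P_{n,k}(x^k)$ with $P_{n,k}(\xi)\in\mathbb{Z}[\xi]$. Then $P_{n,k}$ is monic of degree $N$. Let $\xi_1,\dots,\xi_N$ be its roots counted with multiplicity, and let $\sigma_h$ denote their $h$-th elementary symmetric polynomial. Then $$\sigma_h(\xi_1,\dots,\xi_N)=(-1)^hC_k(n-h-1,h)\quad(h=1,\dots,N),$$ $$\sum_{j=1}^N\xi_j=-(n-2),\qquad\prod_{j=1}^N\xi_j=(-1)^N\binom{q+r}{r}.$$
   Context: For $k\ge2$ and $n\ge1$, the polynomials $\mathcal{F}_{n,k}(x)$ are defined by $\mathcal{F}_{1,k}=1$, $\mathcal{F}_{n,k}=0$ for $n=0,-1,\dots,-(k-2)$, and $\mathcal{F}_{n,k}(x)=x^{k-1}\mathcal{F}_{n-1,k}+\dots+\mathcal{F}_{n-k,k}$ for $n\ge2$. For $n>0$: $q_{n,k}=\lfloor(n-2)/k\rfloor$, and $r_{n,k}\in\{0,\dots,k-1\}$ is the residue of $(k-1)(n-1)$ modulo $k$. For integers $m\ge0$ and $j\ge0$, $C_k(m,j)$ is the coefficient of $x^j$ in $(1+x+\dots+x^{k-1})^m$. It is known (Hoggatt–Bicknell) that $\mathcal{F}_{n,k}(x)=\sum_{h\ge0}C_k(n-h-1,h)\,x^{(k-1)(n-1)-hk}$ for $n\ge1$. *)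

theory Defs
  imports "HOL-Computational_Algebra.Polynomial"
begin

text \<open>Values at indices n \<le> 0 are 0 (the paper's F_{0,k} = ... = F_{-(k-2),k} = 0),
  F_{1,k} = 1, and for n \<ge> 2,
  F_{n,k} = sum_{j=1..k} x^(k-j) F_{n-j,k}, where terms with n - j \<le> 0 vanish.\<close>
function kfib :: "nat \<Rightarrow> nat \<Rightarrow> int poly" where
  "kfib k n = (if n = 0 then 0 else if n = 1 then 1 else
      (\<Sum>j\<in>{1..k}. if j < n then monom 1 (k - j) * kfib k (n - j) else 0))"
  by auto
termination
  by (relation "measure snd") auto

definition q_nk :: "nat \<Rightarrow> nat \<Rightarrow> nat" where
  "q_nk n k = (n - 2) div k"

definition r_nk :: "nat \<Rightarrow> nat \<Rightarrow> nat" where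
  "r_nk n k = ((k - 1) * (n - 1)) mod k"

definition N_nk :: "nat \<Rightarrow> nat \<Rightarrow> nat" where
  "N_nk n k = ((k - 1) * (n - 1)) div k"

definition Ck :: "nat \<Rightarrow> nat \<Rightarrow> nat \<Rightarrow> nat" where
  "Ck k m j = coeff ((\<Sum>i<k. monom (1::nat) i) ^ m) j"

definition P_nk :: "nat \<Rightarrow> nat \<Rightarrow> int poly" where
  "P_nk n k = (THE P. kfib k n = monom 1 (r_nk n k) * pcompose P (monom 1 k))"

definition esym :: "nat \<Rightarrow> (nat \<Rightarrow> complex) \<Rightarrow> nat \<Rightarrow> complex" where
  "esym N \<xi> h = (\<Sum>S\<in>{S. S \<subseteq> {..<N} \<and> card S = h}. \<Prod>j\<in>S. \<xi> j)"

end

theory Submission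
  imports Defs
begin

(* Substituting x^(-k) for x turns the recurrence of F_{n,k} into one for the reversed polynomial
   H_n(y) = sum_h C_k(n-h-1,h) y^h, namely H_n = sum_{j=1..k} y^(j-1) H_{n-j}; coefficientwise this
   is the recurrence C_k(m+1,h) = sum_{i<k} C_k(m,h-i) of the powers of 1 + x + ... + x^(k-1).
   Hence F_{n,k}(x) = x^((k-1)(n-1)) H_n(x^(-k)) (Hoggatt-Bicknell), so P_{n,k}(xi) is the
   reversal xi^N H_n(1/xi) and Vieta's formulas give sigma_h. For sigma_1 note C_k(m,1) = m; for
   sigma_N, the palindromy C_k(m,j) = C_k(m,(k-1)m-j) with m = q+1 and (k-1)(q+1) = N + r reduces
   C_k(q+1,N) to C_k(q+1,r), which is binom(q+r,r) because r < k. *)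

definition ones_poly :: "nat \<Rightarrow> nat poly" where
  "ones_poly k = (\<Sum>i<k. monom 1 i)"

lemma Ck_eq_coeff_power: "Ck k m j = coeff (ones_poly k ^ m) j"
  by (simp add: Ck_def ones_poly_def)

lemma coeff_ones_poly: "coeff (ones_poly k) i = (if i < k then 1 else 0)"
  by (simp add: ones_poly_def coeff_sum)

lemma degree_ones_poly_le: "degree (ones_poly k) \<le> k - 1"
  by (rule degree_le) (auto simp: coeff_ones_poly)

lemma degree_ones_poly: "k \<ge> 1 \<Longrightarrow> degree (ones_poly k) = k - 1"
  by (intro antisym degree_ones_poly_le le_degree) (simp add: coeff_ones_poly)

lemma degree_ones_poly_power: "k \<ge> 1 \<Longrightarrow> degree (ones_poly k ^ m) = (k - 1) * m"
proof (induction m)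
  case (Suc m)
  have "ones_poly k \<noteq> 0"
    using Suc.prems coeff_ones_poly[of k 0] by auto
  then show ?case
    using Suc by (simp add: degree_mult_eq degree_ones_poly)
qed simp

lemma reflect_ones_poly: "k \<ge> 1 \<Longrightarrow> reflect_poly (ones_poly k) = ones_poly k"
  by (rule poly_eqI) (auto simp: coeff_reflect_poly degree_ones_poly coeff_ones_poly)

lemma Ck_0_left: "Ck k 0 h = (if h = 0 then 1 else 0)"
  by (simp add: Ck_eq_coeff_power)

lemma Ck_0_right: "k \<ge> 1 \<Longrightarrow> Ck k m 0 = 1"
  by (simp add: Ck_eq_coeff_power coeff_0_power coeff_ones_poly)

lemma Ck_Suc: "Ck k (Suc m) h = (\<Sum>i | i < k \<and> i \<le> h. Ck k m (h - i))"
proof -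
  have "Ck k (Suc m) h = (\<Sum>i\<le>h. coeff (ones_poly k) i * Ck k m (h - i))"
    by (simp add: Ck_eq_coeff_power coeff_mult)
  also have "\<dots> = (\<Sum>i\<in>{i\<in>{..h}. i < k}. Ck k m (h - i))"
    by (subst sum.inter_filter) (auto simp: coeff_ones_poly intro: sum.cong)
  also have "{i\<in>{..h}. i < k} = {i. i < k \<and> i \<le> h}"
    by auto
  finally show ?thesis .
qed

lemma Ck_eq_0:
  assumes "(k - 1) * m < h"
  shows "Ck k m h = 0"
proof -
  have "degree (ones_poly k ^ m) \<le> (k - 1) * m"
    by (metis degree_ones_poly_le degree_power_le le_trans mult.commute mult_le_mono2)
  then show ?thesis
    using assms by (simp add: Ck_eq_coeff_power coeff_eq_0)
qed

lemma Ck_symmetric: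
  assumes "k \<ge> 1" "j \<le> (k - 1) * m"
  shows "Ck k m j = Ck k m ((k - 1) * m - j)"
proof -
  have "coeff (ones_poly k ^ m) j = coeff (reflect_poly (ones_poly k ^ m)) j"
    using assms(1) by (simp add: reflect_poly_power reflect_ones_poly)
  also have "\<dots> = coeff (ones_poly k ^ m) ((k - 1) * m - j)"
    using assms by (simp add: coeff_reflect_poly degree_ones_poly_power)
  finally show ?thesis
    by (simp add: Ck_eq_coeff_power)
qed

lemma Ck_1_right: "k \<ge> 2 \<Longrightarrow> Ck k m 1 = m"
proof (induction m)
  case (Suc m)
  then have "{i. i < k \<and> i \<le> 1} = {0, 1}"
    by auto
  then show ?case
    using Suc by (simp add: Ck_Suc Ck_0_right)
qed (simp add: Ck_0_left)

lemma Ck_binomial: "r < k \<Longrightarrow> Ck k (Suc m) r = (m + r) choose r"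
proof (induction m arbitrary: r)
  case 0
  then show ?case
    by (simp add: Ck_eq_coeff_power coeff_ones_poly)
next
  case (Suc m)
  then have "{i. i < k \<and> i \<le> r} = {..r}"
    by auto
  then have "Ck k (Suc (Suc m)) r = (\<Sum>i\<le>r. Ck k (Suc m) (r - i))"
    by (simp only: Ck_Suc[of k "Suc m"])
  also have "\<dots> = (\<Sum>i\<le>r. (m + (r - i)) choose (r - i))"
    using Suc by (intro sum.cong) auto
  also have "\<dots> = (\<Sum>i\<le>r. (m + i) choose i)"
    by (rule sum.reindex_bij_witness[of _ "\<lambda>i. r - i" "\<lambda>i. r - i"]) auto
  also have "\<dots> = (Suc m + r) choose r"
    by (simp add: sum_choose_lower)
  finally show ?case .
qed

definition kfib_rev :: "nat \<Rightarrow> nat \<Rightarrow> int poly" where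
  "kfib_rev k n = (\<Sum>h<n. monom (int (Ck k (n - h - 1) h)) h)"

lemma coeff_kfib_rev: "n \<ge> 1 \<Longrightarrow> coeff (kfib_rev k n) h = int (Ck k (n - h - 1) h)"
  by (auto simp: kfib_rev_def coeff_sum coeff_monom Ck_0_left)

lemma degree_kfib_rev:
  assumes "k \<ge> 1" "n \<ge> 1"
  shows "degree (kfib_rev k n) \<le> (k - 1) * (n - 1) div k"
proof (rule degree_le, intro allI impI)
  fix i
  assume "(k - 1) * (n - 1) div k < i"
  then have "(k - 1) * (n - 1) < i * k"
    using assms by (simp add: div_less_iff_less_mult)
  have "(k - 1) * (n - i - 1) < i"
  proof (cases "i < n")
    case True
    then have "(k - 1) * (n - i - 1) + (k - 1) * i = (k - 1) * (n - 1)"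
      by (simp add: distrib_left[symmetric])
    moreover have "i * k = (k - 1) * i + i"
      using assms by (cases k) simp_all
    ultimately show ?thesis
      using \<open>(k - 1) * (n - 1) < i * k\<close> by linarith
  qed (use assms in simp)
  then show "coeff (kfib_rev k n) i = 0"
    using assms by (simp add: coeff_kfib_rev Ck_eq_0)
qed

lemma kfib_rev_rec:
  assumes "n \<ge> 2"
  shows "kfib_rev k n = (\<Sum>j\<in>{1..k}. if j < n then monom 1 (j - 1) * kfib_rev k (n - j) else 0)"
proof (rule poly_eqI)
  fix h
  have "coeff (\<Sum>j\<in>{1..k}. if j < n then monom 1 (j - 1) * kfib_rev k (n - j) else 0) h
      = (\<Sum>j\<in>{1..k}. if j < n \<and> j - 1 \<le> h then int (Ck k (n - h - 2) (h - (j - 1))) else 0)"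
    unfolding coeff_sum by (intro sum.cong) (auto simp: coeff_monom_mult coeff_kfib_rev)
  also have "\<dots> = (\<Sum>i<k. if Suc i < n \<and> i \<le> h then int (Ck k (n - h - 2) (h - i)) else 0)"
    by (rule sum.reindex_bij_witness[of _ Suc "\<lambda>j. j - 1"]) auto
  also have "\<dots> = int (Ck k (n - h - 1) h)"
  proof (cases "h + 2 \<le> n")
    case True
    then have "n - h - 1 = Suc (n - h - 2)"
      by simp
    have "(\<Sum>i<k. if Suc i < n \<and> i \<le> h then int (Ck k (n - h - 2) (h - i)) else 0)
        = (\<Sum>i<k. if i \<le> h then int (Ck k (n - h - 2) (h - i)) else 0)"
      using True by (intro sum.cong) auto
    also have "\<dots> = int (\<Sum>i\<in>{i\<in>{..<k}. i \<le> h}. Ck k (n - h - 2) (h - i))"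
      unfolding of_nat_sum by (rule sum.inter_filter[symmetric]) simp
    also have "\<dots> = int (Ck k (n - h - 1) h)"
      using \<open>n - h - 1 = Suc (n - h - 2)\<close> by (simp add: Ck_Suc Collect_conj_eq Int_commute)
    finally show ?thesis .
  next
    case False
    then show ?thesis
      using assms by (auto simp: Ck_0_left intro: sum.neutral)
  qed
  also have "\<dots> = coeff (kfib_rev k n) h"
    using assms by (simp add: coeff_kfib_rev)
  finally show "coeff (kfib_rev k n) h = coeff (\<Sum>j\<in>{1..k}. if j < n then monom 1 (j - 1) * kfib_rev k (n - j) else 0) h"
    ..
qed

(* x^D p(1/x), for degree p <= D *)
definition rev_poly :: "nat \<Rightarrow> 'a::comm_semiring_1 poly \<Rightarrow> 'a poly" where
  "rev_poly D p = (\<Sum>i\<le>D. monom (coeff p i) (D - i))"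

lemma coeff_rev_poly: "coeff (rev_poly D p) e = (if e \<le> D then coeff p (D - e) else 0)"
proof -
  have "coeff (rev_poly D p) e = (\<Sum>i\<le>D. if i = D - e \<and> e \<le> D then coeff p i else 0)"
    unfolding rev_poly_def coeff_sum by (intro sum.cong) (auto simp: coeff_monom)
  then show ?thesis
    by (simp add: sum.delta')
qed

lemma rev_poly_0 [simp]: "rev_poly D 0 = 0"
  by (simp add: rev_poly_def)

lemma rev_poly_sum: "rev_poly D (sum f A) = (\<Sum>i\<in>A. rev_poly D (f i))"
  by (rule poly_eqI) (simp add: coeff_rev_poly coeff_sum)

lemma rev_poly_monom: "i \<le> D \<Longrightarrow> rev_poly D (monom c i) = monom c (D - i)"
  by (rule poly_eqI) (auto simp: coeff_rev_poly coeff_monom)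

lemma monom_mult_rev_poly:
  assumes "degree p \<le> D"
  shows "monom 1 a * rev_poly D p = rev_poly (D + a + b) (monom 1 b * p)"
  by (rule poly_eqI) (use assms in \<open>auto simp: coeff_monom_mult coeff_rev_poly intro!: coeff_eq_0\<close>)

lemma pcompose_monom_monom:
  "pcompose (monom (c::'a::comm_semiring_1) i) (monom 1 k) = monom c (k * i)"
  by (induction i) (simp_all add: monom_0 monom_Suc pcompose_pCons mult_monom)

lemma pcompose_rev_poly:
  assumes "degree p \<le> D"
  shows "pcompose (rev_poly D p) (monom 1 k) = rev_poly (D * k) (pcompose p (monom 1 k))"
proof -
  have "pcompose (rev_poly D p) (monom 1 k) = (\<Sum>i\<le>D. rev_poly (D * k) (monom (coeff p i) (k * i)))"
    unfolding rev_poly_def[of D p] pcompose_sum pcompose_monom_monom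
    by (intro sum.cong) (auto simp: rev_poly_monom diff_mult_distrib2 mult.commute)
  also have "\<dots> = rev_poly (D * k) (pcompose (\<Sum>i\<le>D. monom (coeff p i) i) (monom 1 k))"
    by (simp add: rev_poly_sum pcompose_sum pcompose_monom_monom)
  also have "(\<Sum>i\<le>D. monom (coeff p i) i) = p"
    using assms by (rule poly_as_sum_of_monoms')
  finally show ?thesis .
qed

lemma degree_pcompose_kfib_rev:
  assumes "k \<ge> 1" "n \<ge> 1"
  shows "degree (pcompose (kfib_rev k n) (monom 1 k)) \<le> (k - 1) * (n - 1)"
proof -
  have "degree (pcompose (kfib_rev k n) (monom 1 k)) = degree (kfib_rev k n) * k"
    by (simp add: degree_pcompose degree_monom_eq)
  also have "\<dots> \<le> (k - 1) * (n - 1) div k * k"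
    using degree_kfib_rev[OF assms] by (rule mult_le_mono1)
  also have "\<dots> \<le> (k - 1) * (n - 1)"
    by simp
  finally show ?thesis .
qed

declare kfib.simps [simp del]

lemma kfib_eq_rev_poly:
  assumes "k \<ge> 1" "n \<ge> 1"
  shows "kfib k n = rev_poly ((k - 1) * (n - 1)) (pcompose (kfib_rev k n) (monom 1 k))"
  using assms(2)
proof (induction n rule: less_induct)
  case (less n)
  show ?case
  proof (cases "n = 1")
    case True
    then show ?thesis
      by (simp add: kfib.simps[of k "Suc 0"] kfib_rev_def Ck_0_left rev_poly_def)
  next
    case False
    with less.prems have "n \<ge> 2"
      by simp
    define E where "E = (k - 1) * (n - 1)"
    have summand: "monom 1 (k - j) * kfib k (n - j)
        = rev_poly E (monom 1 (k * (j - 1)) * pcompose (kfib_rev k (n - j)) (monom 1 k))"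
      if j: "j \<in> {1..k}" "j < n" for j
    proof -
      have "monom 1 (k - j) * kfib k (n - j)
          = monom 1 (k - j) * rev_poly ((k - 1) * (n - j - 1)) (pcompose (kfib_rev k (n - j)) (monom 1 k))"
        using less.IH[of "n - j"] j by simp
      also have "\<dots> = rev_poly ((k - 1) * (n - j - 1) + (k - j) + k * (j - 1))
          (monom 1 (k * (j - 1)) * pcompose (kfib_rev k (n - j)) (monom 1 k))"
        by (rule monom_mult_rev_poly) (use degree_pcompose_kfib_rev[of k "n - j"] assms j in simp)
      also have "(k - 1) * (n - j - 1) + (k - j) + k * (j - 1) = E"
      proof -
        obtain a where "j = Suc a"
          using j by (cases j) auto
        moreover obtain b where "k = j + b"
          using j by (auto simp: le_iff_add)
        moreover obtain c where "n = Suc (j + c)"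
          using j less_imp_Suc_add by blast
        ultimately show ?thesis
          by (simp add: E_def algebra_simps)
      qed
      finally show ?thesis .
    qed
    have "kfib k n = (\<Sum>j\<in>{1..k}. if j < n then monom 1 (k - j) * kfib k (n - j) else 0)"
      using \<open>n \<ge> 2\<close> by (subst kfib.simps) simp
    also have "\<dots> = rev_poly E (\<Sum>j\<in>{1..k}. if j < n then monom 1 (k * (j - 1)) * pcompose (kfib_rev k (n - j)) (monom 1 k) else 0)"
      unfolding rev_poly_sum by (intro sum.cong) (simp_all add: summand)
    also have "(\<Sum>j\<in>{1..k}. if j < n then monom 1 (k * (j - 1)) * pcompose (kfib_rev k (n - j)) (monom 1 k) else 0)
        = pcompose (kfib_rev k n) (monom 1 k)"
      unfolding kfib_rev_rec[OF \<open>n \<ge> 2\<close>] pcompose_sum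
      by (intro sum.cong) (simp_all add: pcompose_mult pcompose_monom_monom)
    finally show ?thesis
      by (simp add: E_def)
  qed
qed

lemma coeff_prod_linear_factors:
  fixes \<xi> :: "'b \<Rightarrow> 'a::comm_ring_1"
  assumes "finite A" "h \<le> card A"
  shows "coeff (\<Prod>j\<in>A. [:- \<xi> j, 1:]) (card A - h)
    = (-1) ^ h * (\<Sum>S | S \<subseteq> A \<and> card S = h. \<Prod>j\<in>S. \<xi> j)"
proof -
  have "(\<Prod>j\<in>A. [:- \<xi> j, 1:]) = (\<Prod>j\<in>A. [:- \<xi> j:] + monom 1 1)"
    by (simp add: monom_Suc monom_0 one_pCons)
  also have "\<dots> = (\<Sum>S\<in>Pow A. (\<Prod>j\<in>S. [:- \<xi> j:]) * (\<Prod>j\<in>A - S. monom 1 1))"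
    using assms(1) by (rule prod_add)
  also have "\<dots> = (\<Sum>S\<in>Pow A. monom ((-1) ^ card S * (\<Prod>j\<in>S. \<xi> j)) (card A - card S))"
  proof (rule sum.cong[OF refl])
    fix S
    assume "S \<in> Pow A"
    then have "card (A - S) = card A - card S"
      using assms(1) by (auto intro: card_Diff_subset finite_subset)
    then show "(\<Prod>j\<in>S. [:- \<xi> j:]) * (\<Prod>j\<in>A - S. monom 1 1)
        = monom ((-1) ^ card S * (\<Prod>j\<in>S. \<xi> j)) (card A - card S)"
      by (simp add: prod_to_poly prod_uminus monom_power smult_monom)
  qed
  finally have "coeff (\<Prod>j\<in>A. [:- \<xi> j, 1:]) (card A - h)
      = (\<Sum>S\<in>Pow A. coeff (monom ((-1) ^ card S * (\<Prod>j\<in>S. \<xi> j)) (card A - card S)) (card A - h))"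
    by (simp add: coeff_sum)
  also have "\<dots> = (\<Sum>S\<in>Pow A. if card S = h then (-1) ^ h * (\<Prod>j\<in>S. \<xi> j) else 0)"
    using assms by (intro sum.cong) (auto simp: coeff_monom dest: card_mono[OF assms(1)])
  also have "\<dots> = (\<Sum>S\<in>{S\<in>Pow A. card S = h}. (-1) ^ h * (\<Prod>j\<in>S. \<xi> j))"
    using assms(1) by (simp only: sum.inter_filter finite_Pow_iff)
  also have "\<dots> = (-1) ^ h * (\<Sum>S | S \<subseteq> A \<and> card S = h. \<Prod>j\<in>S. \<xi> j)"
    by (simp add: sum_distrib_left)
  finally show ?thesis .
qed

lemma esym_eq_coeff_prod:
  "h \<le> N \<Longrightarrow> esym N \<xi> h = (-1) ^ h * coeff (\<Prod>j<N. [:- \<xi> j, 1:]) (N - h)"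
  using coeff_prod_linear_factors[of "{..<N}" h \<xi>] by (simp add: esym_def)

lemma esym_1: "esym N \<xi> 1 = (\<Sum>j<N. \<xi> j)"
proof -
  have "{S. S \<subseteq> {..<N} \<and> card S = 1} = (\<lambda>j. {j}) ` {..<N}"
    by (auto simp: card_1_singleton_iff)
  then show ?thesis
    by (simp add: esym_def sum.reindex)
qed

lemma esym_all: "esym N \<xi> N = (\<Prod>j<N. \<xi> j)"
proof -
  have "{S. S \<subseteq> {..<N} \<and> card S = N} = {{..<N}}"
    using card_subset_eq[of "{..<N}"] by auto
  then show ?thesis
    by (simp add: esym_def)
qed

lemma
  assumes "k \<ge> 1" "n \<ge> 2"
  shows N_nk_add_q_nk: "N_nk n k + q_nk n k = n - 2"
    and N_nk_add_r_nk: "N_nk n k + r_nk n k = (k - 1) * Suc (q_nk n k)"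
proof -
  define q s where "q = q_nk n k" and "s = (n - 2) mod k"
  have "s < k"
    using assms by (simp add: s_def)
  then obtain u where k: "k = Suc (s + u)"
    using less_iff_Suc_add by auto
  have "n - 1 = Suc (q * k + s)"
    using assms by (simp add: q_def s_def q_nk_def)
  then have "(k - 1) * (n - 1) = (q * (k - 1) + s) * k + u"
    unfolding k by (simp add: algebra_simps)
  moreover have "u < k"
    using k by simp
  ultimately have "N_nk n k = q * (k - 1) + s" "r_nk n k = u"
    unfolding N_nk_def r_nk_def by simp_all
  moreover have "n - 2 = q * k + s"
    by (simp add: q_def s_def q_nk_def)
  ultimately show "N_nk n k + q_nk n k = n - 2" "N_nk n k + r_nk n k = (k - 1) * Suc (q_nk n k)"
    by (simp_all add: k q_def algebra_simps)
qed

lemma N_nk_pos: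
  assumes "k \<ge> 2" "n \<ge> 3"
  shows "N_nk n k > 0"
proof -
  have "q_nk n k < n - 2"
    unfolding q_nk_def using assms by (intro div_less_dividend) auto
  then show ?thesis
    using N_nk_add_q_nk[of k n] assms by simp
qed

lemma r_nk_less: "k \<ge> 1 \<Longrightarrow> r_nk n k < k"
  by (simp add: r_nk_def)

lemma Ck_N_nk:
  assumes "k \<ge> 1" "n \<ge> 2"
  shows "Ck k (n - N_nk n k - 1) (N_nk n k) = (q_nk n k + r_nk n k) choose r_nk n k"
proof -
  let ?q = "q_nk n k" and ?r = "r_nk n k"
  have "n - N_nk n k - 1 = Suc ?q" "N_nk n k = (k - 1) * Suc ?q - ?r"
    using N_nk_add_q_nk[OF assms] N_nk_add_r_nk[OF assms] assms(2) by linarith+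
  moreover have "?r \<le> (k - 1) * Suc ?q"
    using N_nk_add_r_nk[OF assms] by linarith
  ultimately show ?thesis
    using Ck_symmetric[of k ?r "Suc ?q"] Ck_binomial[OF r_nk_less] assms(1) by simp
qed

lemma kfib_eq_monom_pcompose:
  assumes "k \<ge> 1" "n \<ge> 1"
  shows "kfib k n = monom 1 (r_nk n k) * pcompose (rev_poly (N_nk n k) (kfib_rev k n)) (monom 1 k)"
proof -
  let ?N = "N_nk n k" and ?r = "r_nk n k" and ?H = "kfib_rev k n"
  have E: "(k - 1) * (n - 1) = ?N * k + ?r"
    by (simp add: N_nk_def r_nk_def)
  have deg: "degree ?H \<le> ?N"
    using degree_kfib_rev[OF assms] by (simp add: N_nk_def)
  then have "degree (pcompose ?H (monom 1 k)) \<le> ?N * k"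
    by (simp add: degree_pcompose degree_monom_eq)
  then have "monom 1 ?r * rev_poly (?N * k) (pcompose ?H (monom 1 k))
      = rev_poly (?N * k + ?r + 0) (monom 1 0 * pcompose ?H (monom 1 k))"
    by (rule monom_mult_rev_poly)
  then show ?thesis
    using kfib_eq_rev_poly[OF assms] E deg by (simp add: pcompose_rev_poly)
qed

lemma monom_mult_pcompose_monom_cancel:
  fixes P Q :: "'a::idom poly"
  assumes "monom 1 r * pcompose P (monom 1 k) = monom 1 r * pcompose Q (monom 1 k)" "k \<ge> 1"
  shows "P = Q"
proof -
  have "pcompose (P - Q) (monom 1 k) = 0"
    using assms(1) by (simp add: pcompose_diff)
  then show ?thesis
    using assms(2) pcompose_eq_0[of "P - Q" "monom 1 k"] by (simp add: degree_monom_eq)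
qed

lemma kfib_decomposition_unique:
  "k \<ge> 1 \<Longrightarrow> n \<ge> 1 \<Longrightarrow> \<exists>!P. kfib k n = monom 1 (r_nk n k) * pcompose P (monom 1 k)"
  using kfib_eq_monom_pcompose monom_mult_pcompose_monom_cancel by metis

lemma P_nk_eq_rev_poly:
  assumes "k \<ge> 1" "n \<ge> 1"
  shows "P_nk n k = rev_poly (N_nk n k) (kfib_rev k n)"
  unfolding P_nk_def
  by (rule the1_equality[OF kfib_decomposition_unique[OF assms] kfib_eq_monom_pcompose[OF assms]])

lemma coeff_P_nk:
  "k \<ge> 1 \<Longrightarrow> n \<ge> 1 \<Longrightarrow> h \<le> N_nk n k \<Longrightarrow> coeff (P_nk n k) (N_nk n k - h) = int (Ck k (n - h - 1) h)"
  by (simp add: P_nk_eq_rev_poly coeff_rev_poly coeff_kfib_rev)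

lemma
  assumes "k \<ge> 1" "n \<ge> 1"
  shows lead_coeff_P_nk: "lead_coeff (P_nk n k) = 1"
    and degree_P_nk: "degree (P_nk n k) = N_nk n k"
proof -
  have lc: "coeff (P_nk n k) (N_nk n k) = 1"
    using coeff_P_nk[OF assms, of 0] assms by (simp add: Ck_0_right)
  show "degree (P_nk n k) = N_nk n k"
  proof (rule antisym)
    show "degree (P_nk n k) \<le> N_nk n k"
      using assms by (intro degree_le) (simp add: P_nk_eq_rev_poly coeff_rev_poly)
    show "N_nk n k \<le> degree (P_nk n k)"
      using lc by (intro le_degree) simp
  qed
  with lc show "lead_coeff (P_nk n k) = 1"
    by simp
qed

lemma esym_roots_P_nk:
  fixes \<xi> :: "nat \<Rightarrow> complex"
  assumes "k \<ge> 1" "n \<ge> 1" "h \<le> N_nk n k"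
    and "map_poly of_int (P_nk n k) = (\<Prod>j<N_nk n k. [:- \<xi> j, 1:])"
  shows "esym (N_nk n k) \<xi> h = (-1) ^ h * of_nat (Ck k (n - h - 1) h)"
proof -
  have "esym (N_nk n k) \<xi> h = (-1) ^ h * of_int (coeff (P_nk n k) (N_nk n k - h))"
    using assms(3) by (simp add: esym_eq_coeff_prod coeff_map_poly flip: assms(4))
  then show ?thesis
    using coeff_P_nk[OF assms(1-3)] by simp
qed

lemma sum_roots_P_nk:
  fixes \<xi> :: "nat \<Rightarrow> complex"
  assumes "k \<ge> 2" "n \<ge> 3"
    and roots: "map_poly of_int (P_nk n k) = (\<Prod>j<N_nk n k. [:- \<xi> j, 1:])"
  shows "(\<Sum>j<N_nk n k. \<xi> j) = - of_nat (n - 2)"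
proof -
  have "(\<Sum>j<N_nk n k. \<xi> j) = esym (N_nk n k) \<xi> 1"
    by (simp only: esym_1)
  also have "\<dots> = - of_nat (Ck k (n - 2) 1)"
    using esym_roots_P_nk[of k n 1 \<xi>] N_nk_pos[of k n] assms by (simp add: numeral_2_eq_2)
  also have "\<dots> = - of_nat (n - 2)"
    using Ck_1_right[OF assms(1)] by simp
  finally show ?thesis .
qed

lemma prod_roots_P_nk:
  fixes \<xi> :: "nat \<Rightarrow> complex"
  assumes "k \<ge> 1" "n \<ge> 2"
    and roots: "map_poly of_int (P_nk n k) = (\<Prod>j<N_nk n k. [:- \<xi> j, 1:])"
  shows "(\<Prod>j<N_nk n k. \<xi> j) = (-1) ^ N_nk n k * of_nat ((q_nk n k + r_nk n k) choose r_nk n k)"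
proof -
  have "(\<Prod>j<N_nk n k. \<xi> j) = esym (N_nk n k) \<xi> (N_nk n k)"
    by (simp only: esym_all)
  also have "\<dots> = (-1) ^ N_nk n k * of_nat (Ck k (n - N_nk n k - 1) (N_nk n k))"
    using esym_roots_P_nk[of k n "N_nk n k" \<xi>] assms by simp
  also have "\<dots> = (-1) ^ N_nk n k * of_nat ((q_nk n k + r_nk n k) choose r_nk n k)"
    using Ck_N_nk[OF assms(1,2)] by simp
  finally show ?thesis .
qed

theorem mainTheorem17:
  fixes n k :: nat
  assumes "k \<ge> 2" and "n \<ge> 3"
  shows "(\<exists>!P. kfib k n = monom 1 (r_nk n k) * pcompose P (monom 1 k))
    \<and> lead_coeff (P_nk n k) = 1 \<and> degree (P_nk n k) = N_nk n k
    \<and> (\<forall>\<xi> :: nat \<Rightarrow> complex.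
         map_poly of_int (P_nk n k) = (\<Prod>j<N_nk n k. [:- \<xi> j, 1:]) \<longrightarrow>
           (\<forall>h\<in>{1..N_nk n k}. esym (N_nk n k) \<xi> h = (-1) ^ h * of_nat (Ck k (n - h - 1) h))
         \<and> (\<Sum>j<N_nk n k. \<xi> j) = - of_nat (n - 2)
         \<and> (\<Prod>j<N_nk n k. \<xi> j) = (-1) ^ N_nk n k * of_nat ((q_nk n k + r_nk n k) choose r_nk n k))"
proof -
  have k: "k \<ge> 1" and n: "n \<ge> 1" "n \<ge> 2"
    using assms by simp_all
  show ?thesis
    using kfib_decomposition_unique[OF k n(1)] lead_coeff_P_nk[OF k n(1)] degree_P_nk[OF k n(1)]
      esym_roots_P_nk[OF k n(1)] sum_roots_P_nk[OF assms] prod_roots_P_nk[OF k n(2)]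
    by simp
qed

end
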